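(* For binary strings with reach $r=1$, \[ \sum_{n\ge0}\mathbf{EL}_{n,2,1}\,a^n=\frac{a(a^2-2a+8)}{2(a^2-4a+8)(a-1)^2}, \] and consequently \[ \mathbf{EL}_{n,2,1}=\frac{7}{10}n-\frac{7}{25}+O\!\left(2^{-3n/2}\right)\quad(n\to\infty); \] in particular $\gamma_{2,1}=\lim_{n\to\infty}\mathbf{EL}_{n,2,1}/n=\frac{7}{10}$.
   Context: For strings $u=u_1\cdots u_n$, $v=v_1\cdots v_n\in\{0,1\}^n$ and an integer $r\ge1$, let $\mathbf{L}_r(u,v)$ be the largest $m$ such that there exist indices $1\le i_1<\dots<i_m\le n$ and $1\le j_1<\dots<j_m\le n$ with $u_{i_a}=v_{j_a}$ and $|i_a-j_a|\le r$ for all $a$. Define $\mathbf{EL}_{n,2,r}=2^{-2n}\sum_{u,v\in\{0,1\}^n}\mathbf{L}_r(u,v)$, with $\mathbf{EL}_{0,2,r}=0$. *)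

theory Defs
  imports "HOL-Analysis.Analysis" "HOL-Library.Landau_Symbols"
begin

text \<open>Binary strings are bool lists; positions are 0-based. A common subsequence with
  reach r of length m is given by strictly increasing index maps i, j on {0..<m}.\<close>

definition common_reach :: "nat \<Rightarrow> bool list \<Rightarrow> bool list \<Rightarrow> nat \<Rightarrow> bool" where
  "common_reach r u v m \<longleftrightarrow>
     (\<exists>i j :: nat \<Rightarrow> nat.
        (\<forall>a<m. i a < length u \<and> j a < length v \<and> u ! (i a) = v ! (j a)
               \<and> \<bar>int (i a) - int (j a)\<bar> \<le> int r)
      \<and> (\<forall>a b. a < b \<and> b < m \<longrightarrow> i a < i b \<and> j a < j b))"

definition LCS_reach :: "nat \<Rightarrow> bool list \<Rightarrow> bool list \<Rightarrow> nat" where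
  "LCS_reach r u v = Max {m. common_reach r u v m}"

definition EL2 :: "nat \<Rightarrow> nat \<Rightarrow> real" where
  "EL2 n r = (\<Sum>u\<in>{xs :: bool list. length xs = n}. \<Sum>v\<in>{xs :: bool list. length xs = n}.
                 real (LCS_reach r u v)) / 2 ^ (2 * n)"

end

theory Submission
  imports Defs
begin

(* For reach 1 the LCS of prefixes obeys the banded dynamic programme T(i+1,j+1) =
   max (T(i,j+1)) (T(i+1,j)) (T(i,j) + [u_i = v_j, |i - j| <= 1]), and entries off the
   band |i - j| <= 1 are frozen.  Hence, for equal-length strings, the diagonal value
   X = T(n,n) evolves under appending a letter to each string as a finite automaton whose
   state records which of T(n,n-1), T(n-1,n) equal X - 1, plus the two last letters.
   Summed over all binary continuations of length k, the future gain from a state s is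
   C(k) + E(k) phi(s) + G(k) psi(s): averaging over one step maps 1, phi, psi into their
   span, so C, E, G satisfy a linear recurrence with eigenvalues 4 and 1 + i.  This gives
   exactly EL_{n,2,1} = 7n/10 - 7/25 + Re ((7 - i)/25 ((1 + i)/4)^n), and the generating
   function, the error term (|1 + i|/4 = 2^(-3/2)) and the limit follow. *)

definition reach_alignment ::
    "nat \<Rightarrow> 'a list \<Rightarrow> 'a list \<Rightarrow> nat \<Rightarrow> nat \<Rightarrow> nat \<Rightarrow> (nat \<Rightarrow> nat) \<Rightarrow> (nat \<Rightarrow> nat) \<Rightarrow> bool" where
  "reach_alignment r u v i j m I J \<longleftrightarrow>
     (\<forall>a<m. I a < i \<and> J a < j \<and> u ! I a = v ! J a \<and> I a \<le> J a + r \<and> J a \<le> I a + r) \<and>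
     (\<forall>a b. a < b \<and> b < m \<longrightarrow> I a < I b \<and> J a < J b)"

lemma common_reach_0: "common_reach r u v 0"
  by (simp add: common_reach_def)

lemma common_reach_Nil1: "common_reach r [] v m \<longleftrightarrow> m = 0"
  and common_reach_Nil2: "common_reach r u [] m \<longleftrightarrow> m = 0"
  unfolding common_reach_def by auto

lemma common_reach_take_iff:
  assumes "i \<le> length u" "j \<le> length v"
  shows "common_reach r (take i u) (take j v) m \<longleftrightarrow> (\<exists>I J. reach_alignment r u v i j m I J)"
proof -
  have "(\<bar>int x - int y\<bar> \<le> int r) = (x \<le> y + r \<and> y \<le> x + r)" for x y
    by arith
  then show ?thesis
    using assms unfolding common_reach_def reach_alignment_def
    by (simp add: min_absorb2 cong: conj_cong)
qed

lemma common_reach_take_mono: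
  assumes "common_reach r (take i u) (take j v) m" "i \<le> i'" "j \<le> j'" "i' \<le> length u" "j' \<le> length v"
  shows "common_reach r (take i' u) (take j' v) m"
proof -
  obtain I J where "reach_alignment r u v i j m I J"
    using assms by (auto simp: common_reach_take_iff)
  then have "reach_alignment r u v i' j' m I J"
    using assms(2,3) order.strict_trans2 unfolding reach_alignment_def by blast
  then show ?thesis
    using common_reach_take_iff[OF assms(4,5)] by blast
qed

lemma common_reach_snoc:
  assumes "common_reach r (take i u) (take j v) m" "i < length u" "j < length v"
    and "u ! i = v ! j" "i \<le> j + r" "j \<le> i + r"
  shows "common_reach r (take (Suc i) u) (take (Suc j) v) (Suc m)"
proof -
  obtain I J where "reach_alignment r u v i j m I J"
    using assms by (auto simp: common_reach_take_iff)
  then have "reach_alignment r u v (Suc i) (Suc j) (Suc m) (I(m := i)) (J(m := j))"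
    using assms(4-6) unfolding reach_alignment_def by (auto simp: less_Suc_eq)
  then show ?thesis
    using common_reach_take_iff[OF Suc_leI Suc_leI, OF assms(2,3)] by blast
qed

lemma common_reach_take_Suc_Suc_cases:
  assumes "common_reach r (take (Suc i) u) (take (Suc j) v) (Suc m)" "i < length u" "j < length v"
  shows "common_reach r (take i u) (take (Suc j) v) (Suc m) \<or> common_reach r (take (Suc i) u) (take j v) (Suc m)
     \<or> common_reach r (take i u) (take j v) m \<and> u ! i = v ! j \<and> i \<le> j + r \<and> j \<le> i + r"
proof -
  have len: "i \<le> length u" "Suc i \<le> length u" "j \<le> length v" "Suc j \<le> length v"
    using assms(2,3) by auto
  obtain I J where al: "reach_alignment r u v (Suc i) (Suc j) (Suc m) I J"
    using assms(1) common_reach_take_iff[OF len(2,4)] by blast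
  then have mono: "\<forall>a b. a < b \<and> b < Suc m \<longrightarrow> I a < I b \<and> J a < J b"
    unfolding reach_alignment_def by blast
  have below_last: "I a \<le> I m \<and> J a \<le> J m" if "a < Suc m" for a
    using mono[rule_format, of a m] that by (cases "a = m") auto
  consider "I m < i" | "J m < j" | "I m = i" "J m = j"
    using al unfolding reach_alignment_def by (meson less_SucE lessI)
  then show ?thesis
  proof cases
    case 1
    then have "reach_alignment r u v i (Suc j) (Suc m) I J"
      using al below_last le_less_trans unfolding reach_alignment_def by blast
    then show ?thesis
      using common_reach_take_iff[OF len(1,4)] by blast
  next
    case 2
    then have "reach_alignment r u v (Suc i) j (Suc m) I J"
      using al below_last le_less_trans unfolding reach_alignment_def by blast
    then show ?thesis
      using common_reach_take_iff[OF len(2,3)] by blast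
  next
    case 3
    then have "reach_alignment r u v i j m I J"
      using al unfolding reach_alignment_def by (metis less_Suc_eq)
    then have "common_reach r (take i u) (take j v) m"
      using common_reach_take_iff[OF len(1,3)] by blast
    moreover have "u ! i = v ! j \<and> i \<le> j + r \<and> j \<le> i + r"
      using al 3 unfolding reach_alignment_def by auto
    ultimately show ?thesis
      by blast
  qed
qed

lemma common_reach_take_Suc_Suc_iff:
  assumes "i < length u" "j < length v"
  shows "common_reach r (take (Suc i) u) (take (Suc j) v) m \<longleftrightarrow>
    common_reach r (take i u) (take (Suc j) v) m \<or> common_reach r (take (Suc i) u) (take j v) m \<or>
    (\<exists>m'. m = Suc m' \<and> common_reach r (take i u) (take j v) m' \<and> u ! i = v ! j \<and> i \<le> j + r \<and> j \<le> i + r)"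
    (is "?lhs \<longleftrightarrow> ?rhs")
proof
  assume ?lhs
  then show ?rhs
    using common_reach_0 common_reach_take_Suc_Suc_cases[OF _ assms] by (cases m) blast+
next
  have le_Suc: "n \<le> Suc n" for n
    by simp
  assume ?rhs
  then show ?lhs
    using common_reach_take_mono[OF _ le_Suc order.refl] common_reach_take_mono[OF _ order.refl le_Suc]
      common_reach_snoc assms by (auto simp: Suc_le_eq)
qed

fun lcs_table :: "nat \<Rightarrow> 'a list \<Rightarrow> 'a list \<Rightarrow> nat \<Rightarrow> nat \<Rightarrow> nat" where
  "lcs_table r u v 0 j = 0"
| "lcs_table r u v (Suc i) 0 = 0"
| "lcs_table r u v (Suc i) (Suc j) =
     max (max (lcs_table r u v i (Suc j)) (lcs_table r u v (Suc i) j))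
         (lcs_table r u v i j + of_bool (u ! i = v ! j \<and> i \<le> j + r \<and> j \<le> i + r))"

lemmas lcs_table_Suc_Suc = lcs_table.simps(3)
declare lcs_table.simps(3) [simp del]

lemma lcs_table_0_right [simp]: "lcs_table r u v i 0 = 0"
  by (cases i) auto

lemma lcs_table_le_Suc_left: "lcs_table r u v i j \<le> lcs_table r u v (Suc i) j"
  by (cases j) (auto simp: lcs_table_Suc_Suc)

lemma lcs_table_le_Suc_right: "lcs_table r u v i j \<le> lcs_table r u v i (Suc j)"
  by (cases i) (auto simp: lcs_table_Suc_Suc)

lemma lcs_table_Suc_right_le: "lcs_table r u v i (Suc j) \<le> lcs_table r u v i j + 1"
proof (induction i arbitrary: j)
  case (Suc i)
  have "lcs_table r u v i (Suc j) \<le> lcs_table r u v (Suc i) j + 1"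
    using Suc.IH[of j] lcs_table_le_Suc_left[of r u v i j] by linarith
  moreover have "lcs_table r u v i j + of_bool c \<le> lcs_table r u v (Suc i) j + 1" for c
    using lcs_table_le_Suc_left[of r u v i j] by (cases c) auto
  ultimately show ?case by (simp add: lcs_table_Suc_Suc)
qed simp

lemma lcs_table_Suc_left_le: "lcs_table r u v (Suc i) j \<le> lcs_table r u v i j + 1"
proof (induction j arbitrary: i)
  case (Suc j)
  have "lcs_table r u v (Suc i) j \<le> lcs_table r u v i (Suc j) + 1"
    using Suc.IH[of i] lcs_table_le_Suc_right[of r u v i j] by linarith
  moreover have "lcs_table r u v i j + of_bool c \<le> lcs_table r u v i (Suc j) + 1" for c
    using lcs_table_le_Suc_right[of r u v i j] by (cases c) auto
  ultimately show ?case by (simp add: lcs_table_Suc_Suc)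
qed simp

lemma lcs_table_right_of_band: "i + r \<le> j \<Longrightarrow> lcs_table r u v i j = lcs_table r u v i (i + r)"
proof (induction r u v i j rule: lcs_table.induct)
  case (3 r u v i j)
  show ?case
  proof (cases "j = i + r")
    case False
    with "3.prems" have "Suc i + r \<le> j" by simp
    then show ?thesis
      using "3.IH" lcs_table_le_Suc_left[of r u v i "Suc (i + r)"]
        lcs_table_le_Suc_right[of r u v "Suc i" "i + r"] by (auto simp: lcs_table_Suc_Suc)
  qed simp
qed simp_all

lemma lcs_table_left_of_band: "j + r \<le> i \<Longrightarrow> lcs_table r u v i j = lcs_table r u v (j + r) j"
proof (induction r u v i j rule: lcs_table.induct)
  case (3 r u v i j)
  show ?case
  proof (cases "i = j + r")
    case False
    with "3.prems" have "Suc j + r \<le> i" by simp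
    then show ?thesis
      using "3.IH" lcs_table_le_Suc_right[of r u v "Suc (j + r)" j]
        lcs_table_le_Suc_left[of r u v "j + r" "Suc j"] by (auto simp: lcs_table_Suc_Suc)
  qed simp
qed simp_all

lemma lcs_table_append:
  "i \<le> length u \<Longrightarrow> j \<le> length v \<Longrightarrow> lcs_table r (u @ x) (v @ y) i j = lcs_table r u v i j"
  by (induction r u v i j rule: lcs_table.induct) (auto simp: nth_append lcs_table_Suc_Suc)

lemma common_reach_iff_le_lcs_table:
  "i \<le> length u \<Longrightarrow> j \<le> length v \<Longrightarrow>
   common_reach r (take i u) (take j v) m \<longleftrightarrow> m \<le> lcs_table r u v i j"
proof (induction r u v i j arbitrary: m rule: lcs_table.induct)
  case (1 r u v j)
  then show ?case by (simp add: common_reach_Nil1)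
next
  case (2 r u v i)
  then show ?case by (simp add: common_reach_Nil2)
next
  case (3 r u v i j)
  let ?match = "u ! i = v ! j \<and> i \<le> j + r \<and> j \<le> i + r"
  have ij: "i < length u" "j < length v"
    using "3.prems" by auto
  have "common_reach r (take (Suc i) u) (take (Suc j) v) m \<longleftrightarrow>
      m \<le> lcs_table r u v i (Suc j) \<or> m \<le> lcs_table r u v (Suc i) j \<or>
      (\<exists>m'. m = Suc m' \<and> m' \<le> lcs_table r u v i j \<and> ?match)"
    using "3.IH" "3.prems" by (simp add: common_reach_take_Suc_Suc_iff[OF ij])
  also have "\<dots> \<longleftrightarrow> m \<le> lcs_table r u v (Suc i) (Suc j)"
    using lcs_table_le_Suc_right[of r u v i j]
    by (cases ?match) (auto simp: lcs_table_Suc_Suc le_max_iff_disj le_Suc_eq)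
  finally show ?case .
qed

lemma LCS_reach_eq_lcs_table: "LCS_reach r u v = lcs_table r u v (length u) (length v)"
proof -
  have "{m. common_reach r u v m} = {..lcs_table r u v (length u) (length v)}"
    using common_reach_iff_le_lcs_table[of "length u" u "length v" v r] by auto
  then show ?thesis
    unfolding LCS_reach_def by (auto intro: Max_eqI)
qed

definition lcs1 :: "'a list \<Rightarrow> 'a list \<Rightarrow> nat" where
  "lcs1 u v = lcs_table 1 u v (length u) (length u)"

(* For u, v of common length n \<ge> 1, with T = lcs_table 1 u v and X = T(n,n) = lcs1 u v,
   both T(n,n-1) and T(n-1,n) lie in {X - 1, X}; the flags dy, dz record whether they
   equal X - 1, and lu, lv are the last letters of u and v. *)
type_synonym 'a lcs1_state = "bool \<times> bool \<times> 'a \<times> 'a"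

definition lcs1_state_of :: "'a list \<Rightarrow> 'a list \<Rightarrow> 'a lcs1_state" where
  "lcs1_state_of u v =
     (lcs_table 1 u v (length u) (length u - 1) < lcs1 u v,
      lcs_table 1 u v (length u - 1) (length u) < lcs1 u v, last u, last v)"

fun lcs1_gain :: "'a lcs1_state \<Rightarrow> 'a \<Rightarrow> 'a \<Rightarrow> bool" where
  "lcs1_gain (dy, dz, lu, lv) a b \<longleftrightarrow> \<not> dy \<and> a = lv \<or> \<not> dz \<and> lu = b \<or> a = b"

fun lcs1_next :: "'a lcs1_state \<Rightarrow> 'a \<Rightarrow> 'a \<Rightarrow> 'a lcs1_state" where
  "lcs1_next (dy, dz, lu, lv) a b =
     (\<not> (\<not> dy \<and> a = lv) \<and> (\<not> dz \<and> lu = b \<or> a = b),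
      \<not> (\<not> dz \<and> lu = b) \<and> (\<not> dy \<and> a = lv \<or> a = b), a, b)"

lemma max_add_of_bool_eq:
  fixes x y :: nat
  assumes "y \<le> x" "x \<le> y + 1"
  shows "max x (y + of_bool p) = x + of_bool (\<not> y < x \<and> p)"
  using assms by (cases p) auto

lemma lcs_table_1_snoc:
  fixes u v :: "'a list" and a b :: 'a
  assumes "length u = Suc k" "length v = Suc k"
  defines "T \<equiv> lcs_table 1 u v" and "T' \<equiv> lcs_table 1 (u @ [a]) (v @ [b])"
  shows "T' (Suc (Suc k)) (Suc k) = max (T (Suc k) (Suc k)) (T (Suc k) k + of_bool (a = last v))"
    and "T' (Suc k) (Suc (Suc k)) = max (T (Suc k) (Suc k)) (T k (Suc k) + of_bool (last u = b))"
    and "T' (Suc (Suc k)) (Suc (Suc k)) =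
      max (max (T' (Suc k) (Suc (Suc k))) (T' (Suc (Suc k)) (Suc k))) (T (Suc k) (Suc k) + of_bool (a = b))"
proof -
  have old: "T' i j = T i j" if "i \<le> Suc k" "j \<le> Suc k" for i j
    using that assms lcs_table_append unfolding T_def T'_def by metis
  have "u \<noteq> []" "v \<noteq> []"
    using assms by auto
  then have letters: "(u @ [a]) ! Suc k = a" "(v @ [b]) ! Suc k = b"
    "(u @ [a]) ! k = last u" "(v @ [b]) ! k = last v"
    using assms by (simp_all add: nth_append last_conv_nth)
  have "T' (Suc (Suc k)) k = T (Suc k) k"
    using lcs_table_left_of_band[of k 1 "Suc (Suc k)" "u @ [a]" "v @ [b]"] old
    by (simp add: T'_def)
  then show "T' (Suc (Suc k)) (Suc k) = max (T (Suc k) (Suc k)) (T (Suc k) k + of_bool (a = last v))"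
    using lcs_table_Suc_Suc[of 1 "u @ [a]" "v @ [b]" "Suc k" k] letters old
      lcs_table_le_Suc_right[of 1 u v "Suc k" k]
    by (simp add: T'_def T_def max_absorb1)
  have "T' k (Suc (Suc k)) = T k (Suc k)"
    using lcs_table_right_of_band[of k 1 "Suc (Suc k)" "u @ [a]" "v @ [b]"] old
    by (simp add: T'_def)
  then show "T' (Suc k) (Suc (Suc k)) = max (T (Suc k) (Suc k)) (T k (Suc k) + of_bool (last u = b))"
    using lcs_table_Suc_Suc[of 1 "u @ [a]" "v @ [b]" k "Suc k"] letters old
      lcs_table_le_Suc_left[of 1 u v k "Suc k"]
    by (simp add: T'_def T_def max_absorb2)
  show "T' (Suc (Suc k)) (Suc (Suc k)) =
      max (max (T' (Suc k) (Suc (Suc k))) (T' (Suc (Suc k)) (Suc k))) (T (Suc k) (Suc k) + of_bool (a = b))"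
    using lcs_table_Suc_Suc[of 1 "u @ [a]" "v @ [b]" "Suc k" "Suc k"] letters old
    by (simp add: T'_def)
qed

lemma lcs1_snoc:
  assumes "length u = Suc k" "length v = Suc k"
  shows "lcs1 (u @ [a]) (v @ [b]) = lcs1 u v + of_bool (lcs1_gain (lcs1_state_of u v) a b)"
    and "lcs1_state_of (u @ [a]) (v @ [b]) = lcs1_next (lcs1_state_of u v) a b"
proof -
  define x where "x = lcs_table 1 u v (Suc k) (Suc k)"
  define y where "y = lcs_table 1 u v (Suc k) k"
  define z where "z = lcs_table 1 u v k (Suc k)"
  define p where "p = (\<not> y < x \<and> a = last v)"
  define q where "q = (\<not> z < x \<and> last u = b)"
  let ?T' = "lcs_table 1 (u @ [a]) (v @ [b])"
  have "y \<le> x" "x \<le> y + 1"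
    using lcs_table_le_Suc_right[of 1 u v "Suc k" k] lcs_table_Suc_right_le[of 1 u v "Suc k" k]
    by (simp_all add: x_def y_def)
  then have row: "?T' (Suc (Suc k)) (Suc k) = x + of_bool p"
    using lcs_table_1_snoc(1)[OF assms, of a b, folded x_def y_def] max_add_of_bool_eq
    by (simp add: p_def)
  have "z \<le> x" "x \<le> z + 1"
    using lcs_table_le_Suc_left[of 1 u v k "Suc k"] lcs_table_Suc_left_le[of 1 u v k "Suc k"]
    by (simp_all add: x_def z_def)
  then have col: "?T' (Suc k) (Suc (Suc k)) = x + of_bool q"
    using lcs_table_1_snoc(2)[OF assms, of a b, folded x_def z_def] max_add_of_bool_eq
    by (simp add: q_def)
  have diag: "?T' (Suc (Suc k)) (Suc (Suc k)) = x + of_bool (p \<or> q \<or> a = b)"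
    using lcs_table_1_snoc(3)[OF assms, of a b, folded x_def] row col
    by (cases p; cases q) simp_all
  have state: "lcs1_state_of u v = (y < x, z < x, last u, last v)"
    using assms by (simp add: lcs1_state_of_def lcs1_def x_def y_def z_def)
  show "lcs1 (u @ [a]) (v @ [b]) = lcs1 u v + of_bool (lcs1_gain (lcs1_state_of u v) a b)"
    using diag assms by (simp add: state lcs1_def x_def p_def q_def)
  have "lcs1_state_of (u @ [a]) (v @ [b]) =
    (?T' (Suc (Suc k)) (Suc k) < ?T' (Suc (Suc k)) (Suc (Suc k)),
     ?T' (Suc k) (Suc (Suc k)) < ?T' (Suc (Suc k)) (Suc (Suc k)), a, b)"
    using assms by (simp add: lcs1_state_of_def lcs1_def)
  then show "lcs1_state_of (u @ [a]) (v @ [b]) = lcs1_next (lcs1_state_of u v) a b"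
    unfolding state row col diag by (simp add: p_def q_def)
qed

lemma sum_length_Suc_snoc:
  fixes f :: "'a::finite list \<Rightarrow> 'b::comm_monoid_add"
  shows "(\<Sum>xs | length xs = Suc n. f xs) = (\<Sum>xs | length xs = n. \<Sum>a\<in>UNIV. f (xs @ [a]))"
proof -
  let ?snoc = "\<lambda>(xs, a). xs @ [a :: 'a]"
  have "{xs :: 'a list. length xs = Suc n} = ?snoc ` ({xs. length xs = n} \<times> UNIV)"
    by (auto simp: length_Suc_conv_rev)
  moreover have "inj_on ?snoc ({xs. length xs = n} \<times> UNIV)"
    by (auto simp: inj_on_def)
  ultimately have "(\<Sum>xs | length xs = Suc n. f xs) = (\<Sum>(xs, a) \<in> {xs. length xs = n} \<times> UNIV. f (xs @ [a]))"
    by (simp add: sum.reindex case_prod_unfold)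
  also have "\<dots> = (\<Sum>xs | length xs = n. \<Sum>a\<in>UNIV. f (xs @ [a]))"
    by (rule sum.cartesian_product[symmetric])
  finally show ?thesis .
qed

fun lcs1_future :: "nat \<Rightarrow> bool lcs1_state \<Rightarrow> real" where
  "lcs1_future 0 s = 0"
| "lcs1_future (Suc k) s =
     (\<Sum>a\<in>UNIV. \<Sum>b\<in>UNIV. 4 ^ k * of_bool (lcs1_gain s a b) + lcs1_future k (lcs1_next s a b))"

lemma sum_lcs1_extend:
  "(\<Sum>u | length u = Suc m + k. \<Sum>v | length v = Suc m + k. real (lcs1 u (v :: bool list))) =
   (\<Sum>u | length u = Suc m. \<Sum>v | length v = Suc m.
      4 ^ k * real (lcs1 u v) + lcs1_future k (lcs1_state_of u v))"
proof (induction k arbitrary: m)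
  case (Suc k)
  have "(\<Sum>u | length u = Suc m + Suc k. \<Sum>v | length v = Suc m + Suc k. real (lcs1 u (v :: bool list))) =
    (\<Sum>u | length u = Suc (Suc m). \<Sum>v | length v = Suc (Suc m).
      4 ^ k * real (lcs1 u v) + lcs1_future k (lcs1_state_of u v))"
    using Suc.IH[of "Suc m"] by simp
  also have "\<dots> = (\<Sum>u | length u = Suc m. \<Sum>a\<in>UNIV. \<Sum>v | length v = Suc m. \<Sum>b\<in>UNIV.
      4 ^ k * real (lcs1 (u @ [a]) (v @ [b])) + lcs1_future k (lcs1_state_of (u @ [a]) (v @ [b])))"
    by (simp only: sum_length_Suc_snoc)
  also have "\<dots> = (\<Sum>u | length u = Suc m. \<Sum>v | length v = Suc m. \<Sum>a\<in>UNIV. \<Sum>b\<in>UNIV.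
      4 ^ k * real (lcs1 (u @ [a]) (v @ [b])) + lcs1_future k (lcs1_state_of (u @ [a]) (v @ [b])))"
    by (intro sum.cong refl sum.swap)
  also have "\<dots> = (\<Sum>u | length u = Suc m. \<Sum>v | length v = Suc m.
      4 ^ Suc k * real (lcs1 u v) + lcs1_future (Suc k) (lcs1_state_of u v))"
  proof (intro sum.cong refl)
    fix u v :: "bool list"
    assume "u \<in> {u. length u = Suc m}" "v \<in> {v. length v = Suc m}"
    then have len: "length u = Suc m" "length v = Suc m" by simp_all
    show "(\<Sum>a\<in>UNIV. \<Sum>b\<in>UNIV.
        4 ^ k * real (lcs1 (u @ [a]) (v @ [b])) + lcs1_future k (lcs1_state_of (u @ [a]) (v @ [b]))) =
      4 ^ Suc k * real (lcs1 u v) + lcs1_future (Suc k) (lcs1_state_of u v)"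
      by (simp add: lcs1_snoc[OF len] UNIV_bool algebra_simps)
  qed
  finally show ?case .
qed simp

fun lcs1_phi :: "'a lcs1_state \<Rightarrow> real" where
  "lcs1_phi (dy, dz, lu, lv) = (if \<not> dy \<and> \<not> dz \<and> lu = lv then 1 else if dy \<and> dz then -1 else 0)"

fun lcs1_psi :: "'a lcs1_state \<Rightarrow> real" where
  "lcs1_psi (dy, dz, lu, lv) = of_bool (\<not> dy \<and> \<not> dz \<and> lu \<noteq> lv)"

lemma sum_lcs1_gain:
  "(\<Sum>a\<in>UNIV. \<Sum>b\<in>UNIV. of_bool (lcs1_gain s a b)) = 3 + lcs1_phi (s :: bool lcs1_state)"
  by (cases s) (auto simp: UNIV_bool simp del: sum_of_bool_eq)

lemma sum_lcs1_phi_next: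
  "(\<Sum>a\<in>UNIV. \<Sum>b\<in>UNIV. lcs1_phi (lcs1_next s a b)) = lcs1_phi (s :: bool lcs1_state) + lcs1_psi s - 1"
  by (cases s) (auto simp: UNIV_bool simp del: sum_of_bool_eq)

lemma sum_lcs1_psi_next:
  "(\<Sum>a\<in>UNIV. \<Sum>b\<in>UNIV. lcs1_psi (lcs1_next s a b)) = 1 - lcs1_phi (s :: bool lcs1_state) + lcs1_psi s"
  by (cases s) (auto simp: UNIV_bool simp del: sum_of_bool_eq)

(* lcs1_future_phi k + \<i> lcs1_future_psi k = (3 + \<i>) (4^k - (1 + \<i>)^k) / 10 solves
   w(k + 1) = (1 + \<i>) w(k) + 4^k, the recurrence forced by the one-step averages above. *)
definition lcs1_future_const :: "nat \<Rightarrow> real" where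
  "lcs1_future_const k =
     4 ^ k * (7/10 * k + 1/50) - Re ((1 + \<i>) ^ k) / 50 + 7 * Im ((1 + \<i>) ^ k) / 50"

definition lcs1_future_phi :: "nat \<Rightarrow> real" where
  "lcs1_future_phi k = (3 * 4 ^ k - 3 * Re ((1 + \<i>) ^ k) + Im ((1 + \<i>) ^ k)) / 10"

definition lcs1_future_psi :: "nat \<Rightarrow> real" where
  "lcs1_future_psi k = (4 ^ k - Re ((1 + \<i>) ^ k) - 3 * Im ((1 + \<i>) ^ k)) / 10"

lemma lcs1_future_eq:
  "lcs1_future k s = lcs1_future_const k + lcs1_future_phi k * lcs1_phi s + lcs1_future_psi k * lcs1_psi s"
proof (induction k arbitrary: s)
  case 0
  then show ?case by (simp add: lcs1_future_const_def lcs1_future_phi_def lcs1_future_psi_def)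
next
  case (Suc k)
  have "lcs1_future (Suc k) s =
    4 ^ k * (\<Sum>a\<in>UNIV. \<Sum>b\<in>UNIV. of_bool (lcs1_gain s a b)) + 4 * lcs1_future_const k
    + lcs1_future_phi k * (\<Sum>a\<in>UNIV. \<Sum>b\<in>UNIV. lcs1_phi (lcs1_next s a b))
    + lcs1_future_psi k * (\<Sum>a\<in>UNIV. \<Sum>b\<in>UNIV. lcs1_psi (lcs1_next s a b))"
    by (simp add: Suc.IH sum.distrib sum_distrib_left del: sum_of_bool_eq)
  also have "\<dots> = lcs1_future_const (Suc k) + lcs1_future_phi (Suc k) * lcs1_phi s
      + lcs1_future_psi (Suc k) * lcs1_psi s"
    unfolding sum_lcs1_gain sum_lcs1_phi_next sum_lcs1_psi_next
    by (simp add: lcs1_future_const_def lcs1_future_phi_def lcs1_future_psi_def field_simps)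
  finally show ?case .
qed

(* (True, True, _, _) behaves like a state of the empty pair: only a diagonal match gains. *)
lemma sum_lcs1_eq_lcs1_future:
  "(\<Sum>u | length u = n. \<Sum>v | length v = n. real (lcs1 u (v :: bool list))) = lcs1_future n (True, True, x, y)"
proof (cases n)
  case 0
  then show ?thesis by (simp add: lcs1_def)
next
  case (Suc k)
  have "(\<Sum>u | length u = n. \<Sum>v | length v = n. real (lcs1 u (v :: bool list))) =
    (\<Sum>u | length u = Suc 0. \<Sum>v | length v = Suc 0. 4 ^ k * real (lcs1 u v) + lcs1_future k (lcs1_state_of u v))"
    using sum_lcs1_extend[of 0 k] Suc by simp
  also have "\<dots> = (\<Sum>a\<in>UNIV. \<Sum>b\<in>UNIV. 4 ^ k * real (lcs1 [a] [b]) + lcs1_future k (lcs1_state_of [a] [b]))"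
    by (simp add: sum_length_Suc_snoc)
  also have "\<dots> = lcs1_future n (True, True, x, y)"
    by (simp add: Suc lcs1_def lcs1_state_of_def lcs_table_Suc_Suc del: sum_of_bool_eq)
  finally show ?thesis .
qed

definition EL2_1_remainder :: "nat \<Rightarrow> real" where
  "EL2_1_remainder n = Re ((7 - \<i>) / 25 * ((1 + \<i>) / 4) ^ n)"

lemma EL2_1_remainder_eq: "EL2_1_remainder n = (7 * Re ((1 + \<i>) ^ n) + Im ((1 + \<i>) ^ n)) / (25 * 4 ^ n)"
proof -
  have "((1 + \<i>) / 4) ^ n = complex_of_real (1 / 4 ^ n) * (1 + \<i>) ^ n"
    by (simp add: power_divide)
  then show ?thesis
    unfolding EL2_1_remainder_def by simp
qed

lemma EL2_1_eq: "EL2 n 1 = 7/10 * n - 7/25 + EL2_1_remainder n"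
proof -
  have "EL2 n 1 = (\<Sum>u | length u = n. \<Sum>v | length v = n. real (lcs1 u (v :: bool list))) / 4 ^ n"
    unfolding EL2_def LCS_reach_eq_lcs_table lcs1_def
    by (simp add: power_mult)
  also have "\<dots> = lcs1_future n (True, True, False, False) / 4 ^ n"
    using sum_lcs1_eq_lcs1_future[of n False False] by simp
  also have "\<dots> = 7/10 * n - 7/25 + EL2_1_remainder n"
    by (simp add: lcs1_future_eq lcs1_future_const_def lcs1_future_phi_def EL2_1_remainder_eq field_simps)
  finally show ?thesis .
qed

lemma norm_one_plus_i [simp]: "cmod (1 + \<i>) = sqrt 2"
  by (simp add: cmod_def)

lemma sqrt_2_div_4_power: "(sqrt 2 / 4) ^ n = 2 powr (- 3 * real n / 2)"
proof -
  have "sqrt 2 ^ n = 2 powr (real n / 2)"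
    using powr_power[of "2 :: real" "1/2" n] by (simp add: powr_half_sqrt)
  moreover have "(4 :: real) ^ n = 2 powr (real (2 * n))"
    by (subst powr_realpow) (simp_all add: power_mult)
  ultimately show ?thesis
    by (simp add: power_divide powr_diff[symmetric])
qed

lemma abs_EL2_1_remainder_le: "\<bar>EL2_1_remainder n\<bar> \<le> cmod ((7 - \<i>) / 25) * (sqrt 2 / 4) ^ n"
  unfolding EL2_1_remainder_def
  using abs_Re_le_cmod[of "(7 - \<i>) / 25 * ((1 + \<i>) / 4) ^ n"]
  by (simp add: norm_mult norm_power norm_divide)

lemma sqrt_2_less_2: "sqrt 2 < 2"
  using real_sqrt_less_iff[of 2 4] by simp

lemma sq_minus_4x_plus_8_pos: "x^2 - 4 * x + 8 > (0 :: real)"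
proof -
  have "x^2 - 4 * x + 8 = (x - 2)^2 + 4"
    by (simp add: power2_eq_square algebra_simps)
  then show ?thesis
    using zero_le_power2[of "x - 2"] by linarith
qed

lemma EL2_1_remainder_sums:
  fixes a :: real
  assumes "\<bar>a\<bar> < 1"
  shows "(\<lambda>n. EL2_1_remainder n * a ^ n) sums (2 * (28 - 6 * a) / (25 * (a^2 - 4 * a + 8)))"
proof -
  define w where "w = (1 + \<i>) / 4 * complex_of_real a"
  have "norm w = sqrt 2 / 4 * \<bar>a\<bar>"
    by (simp add: w_def norm_mult norm_divide)
  also have "\<dots> \<le> sqrt 2 / 4"
    using assms by (intro mult_left_le) auto
  also have "\<dots> < 1"
    using sqrt_2_less_2 by simp
  finally have "norm w < 1" .
  then have "(\<lambda>n. Re ((7 - \<i>) / 25 * w ^ n)) sums Re ((7 - \<i>) / 25 * (1 / (1 - w)))"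
    by (intro sums_Re sums_mult geometric_sums)
  moreover have "Re ((7 - \<i>) / 25 * w ^ n) = EL2_1_remainder n * a ^ n" for n
  proof -
    have "w ^ n = ((1 + \<i>) / 4) ^ n * of_real (a ^ n)"
      unfolding w_def power_mult_distrib of_real_power ..
    then show ?thesis
      by (simp add: EL2_1_remainder_def algebra_simps)
  qed
  moreover have "Re ((7 - \<i>) / 25 * (1 / (1 - w))) = 2 * (28 - 6 * a) / (25 * (a^2 - 4 * a + 8))"
    using sq_minus_4x_plus_8_pos[of a] by (simp add: w_def Re_divide field_simps power2_eq_square)
  ultimately show ?thesis by simp
qed

lemma EL2_1_remainder_tendsto_0: "EL2_1_remainder \<longlonglongrightarrow> 0"
proof -
  have "norm ((1 + \<i>) / 4) < 1"
    using sqrt_2_less_2 by (simp add: norm_divide)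
  then have "(\<lambda>n. (7 - \<i>) / 25 * ((1 + \<i>) / 4) ^ n) \<longlonglongrightarrow> 0"
    by (intro tendsto_mult_right_zero LIMSEQ_power_zero)
  then have "(\<lambda>n. Re ((7 - \<i>) / 25 * ((1 + \<i>) / 4) ^ n)) \<longlonglongrightarrow> Re 0"
    by (rule tendsto_Re)
  then show ?thesis
    by (simp add: EL2_1_remainder_def[abs_def])
qed

lemma EL2_1_generating_function_eq:
  fixes a :: real
  assumes "a \<noteq> 1"
  shows "7/10 * (1 / (1 - a)^2) - 49/50 * (1 / (1 - a)) + 2 * (28 - 6 * a) / (25 * (a^2 - 4 * a + 8))
    = a * (a^2 - 2*a + 8) / (2 * (a^2 - 4*a + 8) * (a - 1)^2)"
proof -
  define d where "d = a^2 - 4 * a + 8"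
  define e where "e = 1 - a"
  have nz: "d \<noteq> 0" "e \<noteq> 0"
    using assms sq_minus_4x_plus_8_pos[of a] by (auto simp: d_def e_def)
  have e2: "(a - 1)^2 = e^2"
    by (simp add: e_def power2_commute)
  have lhs: "7/10 * (1 / e^2) - 49/50 * (1 / e) + 2 * (28 - 6 * a) / (25 * d)
      = (35 * d - 49 * e * d + 4 * (28 - 6 * a) * e^2) / (50 * d * e^2)"
    using nz by (simp add: field_simps power2_eq_square)
  have rhs: "a * (a^2 - 2*a + 8) / (2 * d * e^2) = 25 * (a * (a^2 - 2*a + 8)) / (50 * d * e^2)"
    using nz by (simp add: field_simps power2_eq_square)
  have num: "35 * d - 49 * e * d + 4 * (28 - 6 * a) * e^2 = 25 * (a * (a^2 - 2*a + 8))"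
    by (simp add: d_def e_def power2_eq_square algebra_simps)
  show ?thesis
    unfolding d_def[symmetric] e_def[symmetric] e2 lhs rhs num ..
qed

lemma EL2_1_sums:
  fixes a :: real
  assumes "\<bar>a\<bar> < 1"
  shows "(\<lambda>n. EL2 n 1 * a ^ n) sums (a * (a^2 - 2*a + 8) / (2 * (a^2 - 4*a + 8) * (a - 1)^2))"
proof -
  have "(\<lambda>n. 7/10 * (of_nat (Suc n) * a ^ n) - 49/50 * a ^ n + EL2_1_remainder n * a ^ n) sums
      (7/10 * (1 / (1 - a)^2) - 49/50 * (1 / (1 - a)) + 2 * (28 - 6 * a) / (25 * (a^2 - 4 * a + 8)))"
    using assms
    by (intro sums_add sums_diff sums_mult geometric_sums geometric_deriv_sums EL2_1_remainder_sums) simp_all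
  moreover have "7/10 * (of_nat (Suc n) * a ^ n) - 49/50 * a ^ n + EL2_1_remainder n * a ^ n = EL2 n 1 * a ^ n" for n
    unfolding EL2_1_eq by (simp add: algebra_simps)
  moreover have "a \<noteq> 1"
    using assms by auto
  ultimately show ?thesis
    using EL2_1_generating_function_eq by simp
qed

lemma EL2_1_bigo: "(\<lambda>n. EL2 n 1 - (7/10 * real n - 7/25)) \<in> O(\<lambda>n. 2 powr (- 3 * real n / 2))"
proof (rule bigoI)
  show "\<forall>\<^sub>F n in sequentially. norm (EL2 n 1 - (7/10 * real n - 7/25))
      \<le> cmod ((7 - \<i>) / 25) * norm (2 powr (- 3 * real n / 2) :: real)"
    unfolding EL2_1_eq using abs_EL2_1_remainder_le by (simp add: sqrt_2_div_4_power)
qed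

lemma EL2_1_div_tendsto: "(\<lambda>n. EL2 n 1 / real n) \<longlonglongrightarrow> 7/10"
proof -
  have "(\<lambda>n. 7/10 + (EL2_1_remainder n - 7/25) * (1 / real n)) \<longlonglongrightarrow> 7/10 + (0 - 7/25) * 0"
    by (intro tendsto_intros EL2_1_remainder_tendsto_0 lim_1_over_n)
  moreover have "\<forall>\<^sub>F n in sequentially. 7/10 + (EL2_1_remainder n - 7/25) * (1 / real n) = EL2 n 1 / real n"
    using eventually_gt_at_top[of 0] unfolding EL2_1_eq
    by eventually_elim (simp add: field_simps)
  ultimately show ?thesis
    using Lim_transform_eventually by fastforce
qed

theorem mainTheorem4:
  shows "(\<forall>a::real. \<bar>a\<bar> < 1 \<longrightarrow>
           (\<lambda>n. EL2 n 1 * a ^ n) sums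
             (a * (a^2 - 2*a + 8) / (2 * (a^2 - 4*a + 8) * (a - 1)^2)))
       \<and> (\<lambda>n. EL2 n 1 - (7/10 * real n - 7/25)) \<in> O(\<lambda>n. 2 powr (- 3 * real n / 2))
       \<and> (\<lambda>n. EL2 n 1 / real n) \<longlonglongrightarrow> 7/10"
  using EL2_1_sums EL2_1_bigo EL2_1_div_tendsto by blast

end
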